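(* Let $G$ be a finite, simple, connected graph with $\dim_{wt}(G)=2$ and let $\{u,v\}$ be a weak total metric basis of $G$. Then: (1) there is a unique geodesic (shortest path) $P$ between $u$ and $v$; (2) every neighbor of $u$ and every neighbor of $v$ has degree at most three; (3) every vertex of $P$ other than $u$, $v$ and their neighbors has degree at most five; (4) the maximum degree of $G$ is at most eight; (5) for each $w\in\{u,v\}$ and each $z\in N(w)$, every $r\in N(z)$ satisfies $r\not\sim w$.
   Context: $d(x,y)$ is the shortest-path distance, $N(x)$ the set of neighbors of $x$, and $x\sim y$ denotes adjacency. A set $W\subseteq V(G)$ is a resolving set if for every two distinct vertices $y,z$ there is $x\in W$ with $d(y,x)\ne d(z,x)$. A set $W$ is a weak total resolving set (WTR-set) if $W$ is resolving and, for every $w\in W$ and every $x\in V(G)\setminus W$, there is $w'\in W\setminus\{w\}$ with $d(x,w')\ne d(w,w')$. $\dim_{wt}(G)$ is the minimum cardinality of a WTR-set, and a weak total metric basis is a WTR-set of that cardinality. *)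

theory Defs
  imports Main
begin

definition simple_graph :: "'a set \<Rightarrow> ('a \<Rightarrow> 'a \<Rightarrow> bool) \<Rightarrow> bool" where
  "simple_graph V E \<longleftrightarrow> finite V \<and> (\<forall>x y. E x y \<longrightarrow> x \<in> V \<and> y \<in> V)
     \<and> (\<forall>x y. E x y \<longrightarrow> E y x) \<and> (\<forall>x. \<not> E x x)"

text \<open>A walk is a nonempty list of vertices of V, consecutive ones adjacent;
its length (number of edges) is length p - 1.\<close>

definition is_walk :: "'a set \<Rightarrow> ('a \<Rightarrow> 'a \<Rightarrow> bool) \<Rightarrow> 'a list \<Rightarrow> bool" where
  "is_walk V E p \<longleftrightarrow> p \<noteq> [] \<and> set p \<subseteq> V \<and> (\<forall>i. Suc i < length p \<longrightarrow> E (p ! i) (p ! Suc i))"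

definition walk_between :: "'a set \<Rightarrow> ('a \<Rightarrow> 'a \<Rightarrow> bool) \<Rightarrow> 'a \<Rightarrow> 'a \<Rightarrow> 'a list \<Rightarrow> bool" where
  "walk_between V E x y p \<longleftrightarrow> is_walk V E p \<and> hd p = x \<and> last p = y"

definition connected_graph :: "'a set \<Rightarrow> ('a \<Rightarrow> 'a \<Rightarrow> bool) \<Rightarrow> bool" where
  "connected_graph V E \<longleftrightarrow> V \<noteq> {} \<and> (\<forall>x\<in>V. \<forall>y\<in>V. \<exists>p. walk_between V E x y p)"

text \<open>Shortest-path distance (meaningful for connected graphs).\<close>

definition dist :: "'a set \<Rightarrow> ('a \<Rightarrow> 'a \<Rightarrow> bool) \<Rightarrow> 'a \<Rightarrow> 'a \<Rightarrow> nat" where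
  "dist V E x y = (LEAST n. \<exists>p. walk_between V E x y p \<and> length p = Suc n)"

definition is_geodesic :: "'a set \<Rightarrow> ('a \<Rightarrow> 'a \<Rightarrow> bool) \<Rightarrow> 'a \<Rightarrow> 'a \<Rightarrow> 'a list \<Rightarrow> bool" where
  "is_geodesic V E x y p \<longleftrightarrow> walk_between V E x y p \<and> length p = Suc (dist V E x y)"

definition degree :: "'a set \<Rightarrow> ('a \<Rightarrow> 'a \<Rightarrow> bool) \<Rightarrow> 'a \<Rightarrow> nat" where
  "degree V E x = card {y \<in> V. E x y}"

definition resolving_set :: "'a set \<Rightarrow> ('a \<Rightarrow> 'a \<Rightarrow> bool) \<Rightarrow> 'a set \<Rightarrow> bool" where
  "resolving_set V E W \<longleftrightarrow> W \<subseteq> V \<and>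
     (\<forall>y\<in>V. \<forall>z\<in>V. y \<noteq> z \<longrightarrow> (\<exists>x\<in>W. dist V E y x \<noteq> dist V E z x))"

definition wtr_set :: "'a set \<Rightarrow> ('a \<Rightarrow> 'a \<Rightarrow> bool) \<Rightarrow> 'a set \<Rightarrow> bool" where
  "wtr_set V E W \<longleftrightarrow> resolving_set V E W \<and>
     (\<forall>w\<in>W. \<forall>x\<in>V - W. \<exists>w'\<in>W - {w}. dist V E x w' \<noteq> dist V E w w')"

definition dim_wt :: "'a set \<Rightarrow> ('a \<Rightarrow> 'a \<Rightarrow> bool) \<Rightarrow> nat" where
  "dim_wt V E = (LEAST k. \<exists>W. wtr_set V E W \<and> card W = k)"

definition wt_metric_basis :: "'a set \<Rightarrow> ('a \<Rightarrow> 'a \<Rightarrow> bool) \<Rightarrow> 'a set \<Rightarrow> bool" where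
  "wt_metric_basis V E W \<longleftrightarrow> wtr_set V E W \<and> card W = dim_wt V E"

end

theory Submission
  imports Defs
begin

text \<open>Every vertex is determined by its metric representation (d(x,u), d(x,v)), and
along an edge each coordinate changes by at most one. So the representations of the
neighbours of x are distinct points of the 3 \<times> 3 box around that of x, other than its
centre: this gives degree at most 8. On a u-v geodesic the two coordinates sum to
d(u,v), which is their minimum, so only the 5 points of the box with coordinate sum
at least d(u,v) remain; for the same reason two geodesics agree vertex by vertex.
The weak total condition says that no vertex other than u shares its distance to v
with u. Two adjacent neighbours of u would then have distinct distances to v, both
different from d(u,v) but within one of it and of each other, which is impossible;
hence u lies on no triangle, every neighbour of a neighbour of u other than u is at
distance 2 from u, and only 2 + 1 representations are available.\<close>

locale connected_simple_graph =
  fixes V :: "'a set" and E :: "'a \<Rightarrow> 'a \<Rightarrow> bool"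
  assumes simple: "simple_graph V E" and connected: "connected_graph V E"
begin

lemma adj_in_V: "E x y \<Longrightarrow> x \<in> V \<and> y \<in> V"
  using simple unfolding simple_graph_def by blast

lemma adj_sym: "E x y \<Longrightarrow> E y x"
  using simple unfolding simple_graph_def by blast

lemma adj_irrefl: "\<not> E x x"
  using simple unfolding simple_graph_def by blast

lemma is_walk_rev:
  assumes "is_walk V E p"
  shows "is_walk V E (rev p)"
  unfolding is_walk_def
proof (intro conjI allI impI)
  show "rev p \<noteq> []" "set (rev p) \<subseteq> V"
    using assms unfolding is_walk_def by auto
  fix i assume i: "Suc i < length (rev p)"
  then have "E (p ! (length p - Suc (Suc i))) (p ! Suc (length p - Suc (Suc i)))"
    using assms unfolding is_walk_def by auto
  moreover have "Suc (length p - Suc (Suc i)) = length p - Suc i"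
    using i by simp
  ultimately show "E (rev p ! i) (rev p ! Suc i)"
    using i adj_sym by (simp add: rev_nth)
qed

lemma is_walk_ConsI:
  assumes "is_walk V E p" "E a (hd p)"
  shows "is_walk V E (a # p)"
  unfolding is_walk_def
proof (intro conjI allI impI)
  show "a # p \<noteq> []" by simp
  show "set (a # p) \<subseteq> V"
    using assms adj_in_V unfolding is_walk_def by auto
  fix i assume "Suc i < length (a # p)"
  then show "E ((a # p) ! i) ((a # p) ! Suc i)"
    using assms unfolding is_walk_def by (cases i) (auto simp: hd_conv_nth)
qed

lemma is_walk_ConsD:
  assumes "is_walk V E (a # p)" "p \<noteq> []"
  shows "is_walk V E p \<and> E a (hd p)"
proof
  show "is_walk V E p"
    unfolding is_walk_def
  proof (intro conjI allI impI)
    show "p \<noteq> []" "set p \<subseteq> V"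
      using assms unfolding is_walk_def by auto
    fix i assume "Suc i < length p"
    then show "E (p ! i) (p ! Suc i)"
      using assms(1) unfolding is_walk_def by (metis Suc_less_eq length_Cons nth_Cons_Suc)
  qed
  show "E a (hd p)"
    using assms unfolding is_walk_def by (auto simp: hd_conv_nth)
qed

lemma dist_le_walk_length:
  assumes "walk_between V E x y p"
  shows "dist V E x y \<le> length p - 1"
proof -
  have "length p = Suc (length p - 1)"
    using assms unfolding walk_between_def is_walk_def by simp
  then show ?thesis
    unfolding dist_def using assms by (metis (mono_tags, lifting) Least_le)
qed

lemma shortest_walk_exists:
  assumes "x \<in> V" "y \<in> V"
  shows "\<exists>p. walk_between V E x y p \<and> length p = Suc (dist V E x y)"
proof -
  obtain p where p: "walk_between V E x y p"
    using connected assms unfolding connected_graph_def by blast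
  then have "length p = Suc (length p - 1)"
    unfolding walk_between_def is_walk_def by simp
  then have "\<exists>n p. walk_between V E x y p \<and> length p = Suc n"
    using p by blast
  then show ?thesis
    unfolding dist_def by (rule LeastI_ex)
qed

lemma dist_commute:
  assumes "x \<in> V" "y \<in> V"
  shows "dist V E x y = dist V E y x"
proof -
  have "dist V E y x \<le> dist V E x y" if xy: "x \<in> V" "y \<in> V" for x y
  proof -
    obtain p where p: "walk_between V E x y p" "length p = Suc (dist V E x y)"
      using shortest_walk_exists xy by blast
    then have "walk_between V E y x (rev p)"
      using is_walk_rev unfolding walk_between_def is_walk_def
      by (simp add: hd_rev last_rev)
    then show ?thesis
      using dist_le_walk_length p by fastforce
  qed
  then show ?thesis
    using assms by (meson antisym)
qed

lemma dist_adj_le: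
  assumes "E x y" "z \<in> V"
  shows "dist V E x z \<le> Suc (dist V E y z)"
proof -
  obtain p where p: "walk_between V E y z p" "length p = Suc (dist V E y z)"
    using shortest_walk_exists assms adj_in_V by blast
  then have "walk_between V E x z (x # p)"
    using is_walk_ConsI[of p x] assms unfolding walk_between_def
    by (metis list.sel(1) last_ConsR is_walk_def)
  then show ?thesis
    using dist_le_walk_length p by fastforce
qed

lemma dist_adj_cases:
  assumes "E x y" "z \<in> V"
  shows "dist V E y z \<in> {dist V E x z - 1, dist V E x z, dist V E x z + 1}"
  using dist_adj_le[OF assms] dist_adj_le[OF adj_sym[OF assms(1)] assms(2)] by auto

lemma dist_hd_le_walk:
  "is_walk V E p \<Longrightarrow> z \<in> V \<Longrightarrow> dist V E (hd p) z \<le> (length p - 1) + dist V E (last p) z"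
proof (induction p)
  case Nil
  then show ?case by (simp add: is_walk_def)
next
  case (Cons a p)
  show ?case
  proof (cases "p = []")
    case True
    then show ?thesis by simp
  next
    case False
    then have p: "is_walk V E p" "E a (hd p)"
      using is_walk_ConsD Cons.prems by auto
    have "dist V E a z \<le> Suc (dist V E (hd p) z)"
      using dist_adj_le p Cons.prems by blast
    also have "\<dots> \<le> Suc ((length p - 1) + dist V E (last p) z)"
      using Cons p by simp
    finally show ?thesis
      using False by (cases p) auto
  qed
qed

lemma dist_triangle:
  assumes "x \<in> V" "y \<in> V" "z \<in> V"
  shows "dist V E x z \<le> dist V E x y + dist V E y z"
proof -
  obtain p where "walk_between V E x y p" "length p = Suc (dist V E x y)"
    using shortest_walk_exists assms by blast
  then show ?thesis
    using dist_hd_le_walk[of p z] assms unfolding walk_between_def by auto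
qed

lemma dist_eq_0_iff:
  assumes "x \<in> V" "y \<in> V"
  shows "dist V E x y = 0 \<longleftrightarrow> x = y"
proof
  assume "dist V E x y = 0"
  then obtain p where p: "walk_between V E x y p" "length p = 1"
    using shortest_walk_exists assms by fastforce
  then obtain a where "p = [a]"
    by (metis One_nat_def length_0_conv length_Suc_conv)
  then show "x = y"
    using p unfolding walk_between_def by auto
next
  assume "x = y"
  then show "dist V E x y = 0"
    using assms dist_le_walk_length[of x x "[x]"] unfolding walk_between_def is_walk_def by auto
qed

lemma dist_eq_1_iff:
  assumes "x \<in> V" "y \<in> V"
  shows "dist V E x y = 1 \<longleftrightarrow> E x y"
proof
  assume "dist V E x y = 1"
  then obtain p where p: "walk_between V E x y p" "length p = 2"
    using shortest_walk_exists assms by fastforce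
  then obtain a b where "p = [a, b]"
    by (metis One_nat_def Suc_1 length_0_conv length_Suc_conv)
  then show "E x y"
    using p unfolding walk_between_def is_walk_def by force
next
  assume xy: "E x y"
  then have "walk_between V E x y [x, y]"
    using assms unfolding walk_between_def is_walk_def by (auto simp: less_Suc_eq)
  then have "dist V E x y \<le> 1"
    using dist_le_walk_length by fastforce
  moreover have "x \<noteq> y"
    using xy adj_irrefl by blast
  ultimately show "dist V E x y = 1"
    using dist_eq_0_iff[OF assms] by simp
qed

lemma geodesic_nth_dist:
  assumes "is_geodesic V E x y p" "i < length p"
  shows "p ! i \<in> V \<and> dist V E (p ! i) x = i \<and> dist V E (p ! i) y = dist V E x y - i"
proof -
  have p: "is_walk V E p" "hd p = x" "last p = y" "length p = Suc (dist V E x y)"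
    using assms unfolding is_geodesic_def walk_between_def by auto
  have V: "p ! i \<in> V" "x \<in> V" "y \<in> V"
    using p assms(2) hd_in_set[of p] last_in_set[of p] nth_mem[of i p] unfolding is_walk_def
    by auto
  have "walk_between V E x (p ! i) (take (Suc i) p)"
    using p assms(2) unfolding walk_between_def is_walk_def
    by (auto simp: last_conv_nth hd_conv_nth dest: in_set_takeD)
  then have to_x: "dist V E x (p ! i) \<le> i"
    using dist_le_walk_length assms(2) by fastforce
  have "walk_between V E (p ! i) y (drop i p)"
    using p assms(2) unfolding walk_between_def is_walk_def
    by (auto simp: hd_drop_conv_nth dest: in_set_dropD)
  then have to_y: "dist V E (p ! i) y \<le> dist V E x y - i"
    using dist_le_walk_length p(4) by fastforce
  show ?thesis
    using to_x to_y dist_triangle[of x "p ! i" y] dist_commute[of x "p ! i"] V assms(2) p(4)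
    by auto
qed

end

locale resolving_pair = connected_simple_graph +
  fixes u v :: 'a
  assumes resolving: "resolving_set V E {u, v}"
begin

lemma u_in_V: "u \<in> V" and v_in_V: "v \<in> V"
  using resolving unfolding resolving_set_def by auto

definition metric_rep :: "'a \<Rightarrow> nat \<times> nat" where
  "metric_rep x = (dist V E x u, dist V E x v)"

lemma inj_on_metric_rep: "inj_on metric_rep V"
  using resolving unfolding inj_on_def metric_rep_def resolving_set_def by blast

lemma degree_le_card:
  assumes "metric_rep ` {y \<in> V. E x y} \<subseteq> S" "finite S"
  shows "degree V E x \<le> card S"
proof -
  have "degree V E x = card (metric_rep ` {y \<in> V. E x y})"
    unfolding degree_def using inj_on_metric_rep by (simp add: card_image inj_on_subset)
  also have "\<dots> \<le> card S"
    using assms card_mono by blast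
  finally show ?thesis .
qed

lemma metric_rep_adj_ne:
  assumes "E x y"
  shows "metric_rep y \<noteq> metric_rep x"
  using assms adj_in_V adj_irrefl inj_on_metric_rep unfolding inj_on_def by metis

lemma geodesic_unique:
  assumes "is_geodesic V E u v p" "is_geodesic V E u v q"
  shows "p = q"
proof (rule nth_equalityI)
  show len: "length p = length q"
    using assms unfolding is_geodesic_def by simp
  fix i assume "i < length p"
  then have "metric_rep (p ! i) = metric_rep (q ! i)" "p ! i \<in> V" "q ! i \<in> V"
    using geodesic_nth_dist[OF assms(1)] geodesic_nth_dist[OF assms(2)] len
    unfolding metric_rep_def by auto
  then show "p ! i = q ! i"
    using inj_on_metric_rep unfolding inj_on_def by blast
qed

lemma degree_le_8: "degree V E x \<le> 8"
proof -
  define a where "a = dist V E x u"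
  define b where "b = dist V E x v"
  define box where "box = {a - 1, a, a + 1} \<times> {b - 1, b, b + 1}"
  have "metric_rep ` {y \<in> V. E x y} \<subseteq> box - {(a, b)}"
  proof
    fix q assume "q \<in> metric_rep ` {y \<in> V. E x y}"
    then obtain r where r: "E x r" "q = metric_rep r" by blast
    then have "q \<in> box"
      using dist_adj_cases[OF r(1) u_in_V] dist_adj_cases[OF r(1) v_in_V]
      unfolding box_def metric_rep_def a_def b_def by blast
    moreover have "q \<noteq> (a, b)"
      using metric_rep_adj_ne[OF r(1)] r(2) unfolding metric_rep_def a_def b_def by simp
    ultimately show "q \<in> box - {(a, b)}" by blast
  qed
  moreover have "card (box - {(a, b)}) \<le> 8"
  proof -
    have "card {a - 1, a, a + 1} \<le> 3" "card {b - 1, b, b + 1} \<le> 3"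
      using card_length[of "[a - 1, a, a + 1]"] card_length[of "[b - 1, b, b + 1]"] by simp_all
    then have "card box \<le> 3 * 3"
      unfolding box_def card_cartesian_product by (rule mult_le_mono)
    moreover have "(a, b) \<in> box"
      unfolding box_def by blast
    ultimately show ?thesis
      by (simp add: card_Diff_singleton)
  qed
  moreover have "finite (box - {(a, b)})"
    unfolding box_def by simp
  ultimately show ?thesis
    using degree_le_card by (meson order_trans)
qed

lemma degree_on_geodesic_le_5:
  assumes "is_geodesic V E u v p" "x \<in> set p"
  shows "degree V E x \<le> 5"
proof -
  define a where "a = dist V E x u"
  define b where "b = dist V E x v"
  define S where "S = {(a - 1, b + 1), (a + 1, b - 1), (a, b + 1), (a + 1, b), (a + 1, b + 1)}"
  obtain i where "i < length p" "x = p ! i"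
    using assms(2) by (metis in_set_conv_nth)
  then have on_geodesic: "a + b = dist V E u v"
    using geodesic_nth_dist[OF assms(1)] assms(1) unfolding a_def b_def is_geodesic_def
    by auto
  have "metric_rep ` {y \<in> V. E x y} \<subseteq> S"
  proof
    fix q assume "q \<in> metric_rep ` {y \<in> V. E x y}"
    then obtain r where r: "r \<in> V" "E x r" "q = metric_rep r" by blast
    define a' where "a' = dist V E r u"
    define b' where "b' = dist V E r v"
    have "a' \<noteq> a \<or> b' \<noteq> b"
      using metric_rep_adj_ne[OF r(2)] unfolding metric_rep_def a_def b_def a'_def b'_def by simp
    moreover have "a + b \<le> a' + b'"
      using on_geodesic dist_triangle[OF u_in_V r(1) v_in_V] dist_commute[OF u_in_V r(1)]
      unfolding a'_def b'_def by simp
    moreover have "a' = a - 1 \<or> a' = a \<or> a' = a + 1" "b' = b - 1 \<or> b' = b \<or> b' = b + 1"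
      using dist_adj_cases[OF r(2) u_in_V] dist_adj_cases[OF r(2) v_in_V]
      unfolding a_def b_def a'_def b'_def by auto
    ultimately have "(a', b') \<in> S"
      unfolding S_def by (elim disjE) simp_all
    then show "q \<in> S"
      using r(3) unfolding metric_rep_def a'_def b'_def by simp
  qed
  moreover have "card S \<le> 5"
    unfolding S_def
    using card_length[of "[(a - 1, b + 1), (a + 1, b - 1), (a, b + 1), (a + 1, b), (a + 1, b + 1)]"]
    by simp
  ultimately show ?thesis
    using degree_le_card[of x S] unfolding S_def by simp
qed

end

locale wtr_pair = connected_simple_graph +
  fixes u v :: 'a
  assumes distinct: "u \<noteq> v" and wtr: "wtr_set V E {u, v}"
begin

sublocale resolving_pair
  using wtr unfolding wtr_set_def by unfold_locales blast

lemma wtr_pair_swap: "wtr_pair V E v u"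
  using distinct wtr by unfold_locales (auto simp: insert_commute)

lemma dist_v_ne_dist_u_v:
  assumes "x \<in> V" "x \<noteq> u"
  shows "dist V E x v \<noteq> dist V E u v"
proof (cases "x = v")
  case True
  then show ?thesis
    using distinct dist_eq_0_iff[OF v_in_V v_in_V] dist_eq_0_iff[OF u_in_V v_in_V] by simp
next
  case False
  then have "\<exists>w'\<in>{u, v} - {u}. dist V E x w' \<noteq> dist V E u w'"
    using wtr assms unfolding wtr_set_def by blast
  then show ?thesis
    using distinct by auto
qed

lemma no_triangle_through_u:
  assumes "E u z" "E z r"
  shows "\<not> E r u"
proof
  assume ru: "E r u"
  have V: "z \<in> V" "r \<in> V"
    using assms adj_in_V by auto
  have ne: "z \<noteq> u" "r \<noteq> u" "r \<noteq> z"
    using assms ru adj_irrefl by auto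
  have "dist V E z u = 1" "dist V E r u = 1"
    using dist_eq_1_iff V u_in_V adj_sym assms ru by auto
  then have "dist V E z v \<noteq> dist V E r v"
    using resolving V ne unfolding resolving_set_def by auto
  moreover have "dist V E z v \<noteq> dist V E u v" "dist V E r v \<noteq> dist V E u v"
    using dist_v_ne_dist_u_v V ne by auto
  ultimately show False
    using dist_adj_le[OF assms(1) v_in_V] dist_adj_le[OF adj_sym[OF assms(1)] v_in_V]
      dist_adj_le[OF ru v_in_V] dist_adj_le[OF adj_sym[OF ru] v_in_V]
      dist_adj_le[OF assms(2) v_in_V] dist_adj_le[OF adj_sym[OF assms(2)] v_in_V]
    by linarith
qed

lemma degree_neighbour_of_u_le_3:
  assumes "E u z"
  shows "degree V E z \<le> 3"
proof -
  define D where "D = dist V E u v"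
  define e where "e = dist V E z v"
  define T where "T = {e - 1, e, e + 1} - {D}"
  define S where "S = insert (0, D) (Pair (2::nat) ` T)"
  have "metric_rep ` {y \<in> V. E z y} \<subseteq> S"
  proof
    fix q assume "q \<in> metric_rep ` {y \<in> V. E z y}"
    then obtain r where r: "r \<in> V" "E z r" "q = metric_rep r" by blast
    show "q \<in> S"
    proof (cases "r = u")
      case True
      then show ?thesis
        using r dist_eq_0_iff u_in_V unfolding S_def metric_rep_def D_def by simp
    next
      case False
      have "dist V E r u \<noteq> 0" "dist V E r u \<noteq> 1"
        using False dist_eq_0_iff dist_eq_1_iff r(1) u_in_V no_triangle_through_u assms r(2)
        by auto
      moreover have "dist V E z u = 1"
        using dist_eq_1_iff adj_in_V adj_sym assms by blast
      ultimately have "dist V E r u = 2"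
        using dist_adj_le[OF adj_sym[OF r(2)] u_in_V] by simp
      moreover have "dist V E r v \<in> T"
        using dist_adj_cases[OF r(2) v_in_V] dist_v_ne_dist_u_v[OF r(1) False]
        unfolding T_def e_def D_def by blast
      ultimately show ?thesis
        using r(3) unfolding S_def metric_rep_def by simp
    qed
  qed
  moreover have "card S \<le> 3"
  proof -
    have "D \<in> {e - 1, e, e + 1}"
      using dist_adj_cases[OF adj_sym[OF assms] v_in_V] unfolding D_def e_def .
    then have "card T \<le> 2"
      using card_length[of "[e - 1, e, e + 1]"] unfolding T_def
      by (simp add: card_Diff_singleton)
    moreover have "card S \<le> Suc (card (Pair (2::nat) ` T))"
      unfolding S_def by (simp add: card_insert_if T_def)
    moreover have "card (Pair (2::nat) ` T) \<le> card T"
      unfolding T_def by (rule card_image_le) simp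
    ultimately show ?thesis by simp
  qed
  moreover have "finite S"
    unfolding S_def T_def by simp
  ultimately show ?thesis
    using degree_le_card by (meson order_trans)
qed

end

theorem theorem2:
  fixes V :: "'a set" and E :: "'a \<Rightarrow> 'a \<Rightarrow> bool" and u v :: 'a
  assumes "simple_graph V E" and "connected_graph V E"
    and "dim_wt V E = 2"
    and "wt_metric_basis V E {u, v}"
  shows "(\<exists>!P. is_geodesic V E u v P)
    \<and> (\<forall>w\<in>{u, v}. \<forall>z\<in>V. E w z \<longrightarrow> degree V E z \<le> 3)
    \<and> (\<forall>P. is_geodesic V E u v P \<longrightarrow>
          (\<forall>x\<in>set P. x \<noteq> u \<and> x \<noteq> v \<and> \<not> E u x \<and> \<not> E v x \<longrightarrow> degree V E x \<le> 5))
    \<and> (\<forall>x\<in>V. degree V E x \<le> 8)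
    \<and> (\<forall>w\<in>{u, v}. \<forall>z\<in>V. E w z \<longrightarrow> (\<forall>r\<in>V. E z r \<longrightarrow> \<not> E r w))"
proof -
  have "card {u, v} = 2" "wtr_set V E {u, v}"
    using assms(3,4) unfolding wt_metric_basis_def by auto
  then interpret uv: wtr_pair V E u v
    using assms(1,2) by unfold_locales (auto simp: card_insert_if split: if_splits)
  interpret vu: wtr_pair V E v u
    by (rule uv.wtr_pair_swap)
  have "\<exists>!P. is_geodesic V E u v P"
    using uv.shortest_walk_exists[OF uv.u_in_V uv.v_in_V] uv.geodesic_unique
    unfolding is_geodesic_def by blast
  then show ?thesis
    using uv.degree_neighbour_of_u_le_3 vu.degree_neighbour_of_u_le_3
      uv.degree_on_geodesic_le_5 uv.degree_le_8
      uv.no_triangle_through_u vu.no_triangle_through_u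
    by blast
qed

end
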